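(* Let $A\in\mathbb{R}^{n\times d}$ be any matrix and let $\alpha_t=t$ for $t\ge 1$. Consider the following two procedures. (Smooth Perceptron.) For $\mu>0$ and $\mathbf{v}\in\mathbb{R}^d$ let $\mathbf{q}_{\mu}(\mathbf{v})=\arg\min_{\mathbf{q}\in\Delta^n}\big[\mathbf{q}^{\top}A\mathbf{v}+\mu D_E(\mathbf{q},\tfrac{\mathbf{1}}{n})\big]$. Set $\theta_0=\tfrac23$, $\mu_0=4$, $\mathbf{v}_0=\tfrac{1}{n}A^{\top}\mathbf{1}$, $\mathbf{q}_0=\mathbf{q}_{\mu_0}(\mathbf{v}_0)$, and for $t=1,\dots,T-1$: $\mathbf{v}_t=(1-\theta_{t-1})(\mathbf{v}_{t-1}+\theta_{t-1}A^{\top}\mathbf{q}_{t-1})+\theta_{t-1}^2A^{\top}\mathbf{q}_{\mu_{t-1}}(\mathbf{v}_{t-1})$, $\mu_t=(1-\theta_{t-1})\mu_{t-1}$, $\mathbf{q}_t=(1-\theta_{t-1})\mathbf{q}_{t-1}+\theta_{t-1}\mathbf{q}_{\mu_t}(\mathbf{v}_t)$, $\theta_t=\tfrac{2}{t+3}$. (Game dynamics.) Let $g(\mathbf{w},\mathbf{p})=\mathbf{p}^{\top}A\mathbf{w}-\tfrac12\|\mathbf{w}\|_2^2$, $\mathbf{p}_0=\tfrac{\mathbf{1}}{n}$, and for $j\ge0$ let $h_j(\mathbf{w})=-g(\mathbf{w},\mathbf{p}_j)$ and $\ell_j(\mathbf{p})=g(\mathbf{w}_j,\mathbf{p})$. For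 $t=1,\dots,T$: $\mathbf{w}_t=\arg\min_{\mathbf{w}\in\mathbb{R}^d}\sum_{j=1}^{t-1}\alpha_jh_j(\mathbf{w})+\alpha_th_{t-1}(\mathbf{w})$, and then $\mathbf{p}_t=\arg\min_{\mathbf{p}\in\Delta^n}\tfrac14\sum_{s=1}^{t}\alpha_s\ell_s(\mathbf{p})+D_E(\mathbf{p},\tfrac{\mathbf{1}}{n})$. Let $\overline{\mathbf{w}}_T=\frac{\sum_{t=1}^T\alpha_t\mathbf{w}_t}{\sum_{t=1}^T\alpha_t}$. Then $\mathbf{v}_{T-1}=\overline{\mathbf{w}}_T$ and $\mathbf{q}_{T-1}=\frac{\sum_{t=1}^{T}\alpha_t\mathbf{p}_t}{\sum_{t=1}^{T}\alpha_t}$.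
   Context: $\Delta^n$ is the probability simplex in $\mathbb{R}^n$, $\mathbf{1}$ is the all-ones vector. $E(\mathbf{p})=\sum_i p_i\log p_i$ is the negative entropy and $D_E(\mathbf{p},\mathbf{q})=\sum_i p_i\log(p_i/q_i)$ its Bregman divergence on $\Delta^n$ (the KL divergence). *)

theory Defs
  imports "HOL-Analysis.Analysis"
begin

definition prob_simplex :: "(real ^ 'n) set" where
  "prob_simplex = {q. (\<forall>i. 0 \<le> q $ i) \<and> (\<Sum>i\<in>UNIV. q $ i) = 1}"

definition unif :: "real ^ 'n" where
  "unif = (\<chi> i. 1 / real CARD('n))"

text \<open>Bregman divergence of the negative entropy (KL divergence), with 0 log 0 = 0
  (automatic since 0 * _ = 0).\<close>
definition KL :: "real ^ 'n \<Rightarrow> real ^ 'n \<Rightarrow> real" where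
  "KL p q = (\<Sum>i\<in>UNIV. p $ i * ln (p $ i / q $ i))"

text \<open>arg min of f over S (the minimizers here are unique).\<close>
definition argmin :: "'a set \<Rightarrow> ('a \<Rightarrow> real) \<Rightarrow> 'a" where
  "argmin S f = (SOME x. x \<in> S \<and> (\<forall>y\<in>S. f x \<le> f y))"

definition qmu :: "real ^ 'd ^ 'n \<Rightarrow> real \<Rightarrow> real ^ 'd \<Rightarrow> real ^ 'n" where
  "qmu A \<mu> v = argmin prob_simplex (\<lambda>q. q \<bullet> (A *v v) + \<mu> * KL q unif)"

definition gpay :: "real ^ 'd ^ 'n \<Rightarrow> real ^ 'd \<Rightarrow> real ^ 'n \<Rightarrow> real" where
  "gpay A w p = p \<bullet> (A *v w) - 1/2 * (norm w)\<^sup>2"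

end

theory Submission
  imports Defs
begin

text \<open>Both procedures compute running weighted means. The game's best responses have
  closed forms: \<open>w t\<close> minimises a strongly convex quadratic, so it is \<open>A\<^sup>T\<close> applied to the
  \<open>\<alpha>\<close>-weighted mean of \<open>p 1, \<dots>, p t\<close> in which the not yet available \<open>p t\<close> is replaced by
  \<open>p (t - 1)\<close>; and after rescaling its objective, \<open>p t\<close> is \<open>q\<^sub>\<mu>\<close> of the \<open>\<alpha>\<close>-weighted mean of
  \<open>w 1, \<dots>, w t\<close> with \<open>\<mu> = 4 / (\<alpha> 1 + \<dots> + \<alpha> t)\<close>. For \<open>\<alpha> t = t\<close> the newest point enters
  the weighted mean of \<open>t + 1\<close> points with weight \<open>2 / (t + 2) = \<theta> (t - 1)\<close>, so the smooth
  perceptron's updates of \<open>v\<close>, \<open>q\<close> and \<open>\<mu>\<close> are exactly running-mean updates, and induction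
  identifies \<open>v k\<close>, \<open>q k\<close> with the weighted means of \<open>w\<close>, \<open>p\<close> over \<open>1, \<dots>, k + 1\<close>.\<close>

definition weighted_mean :: "(nat \<Rightarrow> real) \<Rightarrow> (nat \<Rightarrow> 'a::real_vector) \<Rightarrow> nat \<Rightarrow> 'a" where
  "weighted_mean \<alpha> x t = (1 / (\<Sum>s=1..t. \<alpha> s)) *\<^sub>R (\<Sum>s=1..t. \<alpha> s *\<^sub>R x s)"

lemma weighted_mean_cong:
  "(\<And>s. 1 \<le> s \<Longrightarrow> s \<le> t \<Longrightarrow> x s = y s) \<Longrightarrow> weighted_mean \<alpha> x t = weighted_mean \<alpha> y t"
  unfolding weighted_mean_def by (intro arg_cong[where f = "scaleR _"] sum.cong) auto

lemma weighted_mean_Suc: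
  assumes "(\<Sum>s=1..t. \<alpha> s) \<noteq> 0"
  shows "weighted_mean \<alpha> x (Suc t) =
    ((\<Sum>s=1..t. \<alpha> s) / (\<Sum>s=1..Suc t. \<alpha> s)) *\<^sub>R weighted_mean \<alpha> x t
    + (\<alpha> (Suc t) / (\<Sum>s=1..Suc t. \<alpha> s)) *\<^sub>R x (Suc t)"
  using assms by (simp add: weighted_mean_def scaleR_add_right)

lemma sum_linear_weights:
  assumes "\<And>s. 1 \<le> s \<Longrightarrow> \<alpha> s = real s"
  shows "(\<Sum>s=1..t. \<alpha> s) = real t * (real t + 1) / 2"
proof -
  have "(\<Sum>s=1..t. \<alpha> s) = (\<Sum>s=1..t. real s)" using assms by (intro sum.cong) auto
  then show ?thesis using double_gauss_sum_from_Suc_0[of t, where ?'a = real] by simp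
qed

lemma weighted_mean_linear_Suc:
  assumes alpha: "\<And>s. 1 \<le> s \<Longrightarrow> \<alpha> s = real s" and "1 \<le> t"
  shows "weighted_mean \<alpha> x (Suc t) =
    (1 - 2 / (real t + 2)) *\<^sub>R weighted_mean \<alpha> x t + (2 / (real t + 2)) *\<^sub>R x (Suc t)"
proof -
  have sums: "(\<Sum>s=1..t. \<alpha> s) = real t * (real t + 1) / 2"
    "(\<Sum>s=1..Suc t. \<alpha> s) = (real t + 1) * (real t + 2) / 2"
    using sum_linear_weights[OF alpha, of t] sum_linear_weights[OF alpha, of "Suc t"]
    by (simp_all add: algebra_simps)
  have "(\<Sum>s=1..t. \<alpha> s) \<noteq> 0" unfolding sums using \<open>1 \<le> t\<close> by simp
  moreover have "(\<Sum>s=1..t. \<alpha> s) / (\<Sum>s=1..Suc t. \<alpha> s) = 1 - 2 / (real t + 2)"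
    unfolding sums by (simp add: field_simps add_nonneg_eq_0_iff)
  moreover have "\<alpha> (Suc t) / (\<Sum>s=1..Suc t. \<alpha> s) = 2 / (real t + 2)"
    unfolding sums by (simp add: alpha field_simps add_nonneg_eq_0_iff)
  ultimately show ?thesis by (simp add: weighted_mean_Suc)
qed

lemma argmin_scale_shift:
  assumes "c > 0"
  shows "argmin S (\<lambda>x. c * f x + d) = argmin S f"
  unfolding argmin_def using assms by simp

lemma argmin_quadratic:
  fixes b :: "'a::real_inner"
  assumes c: "c > 0"
  shows "argmin UNIV (\<lambda>x. c/2 * (norm x)\<^sup>2 - inner b x) = (1/c) *\<^sub>R b"
proof -
  let ?x0 = "(1/c) *\<^sub>R b"
  let ?f = "\<lambda>x. c/2 * (norm x)\<^sup>2 - inner b x"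
  have completed_square: "?f x = c/2 * (norm (x - ?x0))\<^sup>2 - (norm b)\<^sup>2 / (2*c)" for x
    using c by (simp add: power2_norm_eq_inner inner_diff_left inner_diff_right inner_commute field_simps)
  show ?thesis unfolding argmin_def
  proof (rule some_equality)
    show "?x0 \<in> UNIV \<and> (\<forall>y\<in>UNIV. ?f ?x0 \<le> ?f y)"
      using c by (simp only: completed_square) simp
  next
    fix x assume "x \<in> UNIV \<and> (\<forall>y\<in>UNIV. ?f x \<le> ?f y)"
    then have "?f x \<le> ?f ?x0" by blast
    then have "c/2 * (norm (x - ?x0))\<^sup>2 \<le> 0" by (simp only: completed_square) simp
    then have "(norm (x - ?x0))\<^sup>2 \<le> 0" using c by (simp add: mult_le_0_iff)
    then show "x = ?x0" by simp
  qed
qed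

lemma gpay_transpose: "gpay A w y = (transpose A *v y) \<bullet> w - (norm w)\<^sup>2 / 2"
  by (simp add: gpay_def dot_lmul_matrix)

lemma sum_gpay:
  "(\<Sum>s\<in>J. \<beta> s * gpay A (x s) y)
     = y \<bullet> (A *v (\<Sum>s\<in>J. \<beta> s *\<^sub>R x s)) - (\<Sum>s\<in>J. \<beta> s * (norm (x s))\<^sup>2) / 2"
  by (simp add: gpay_def vec.sum matrix_vector_mult_scaleR inner_sum_right
      right_diff_distrib sum_subtractf sum_divide_distrib)

lemma sum_neg_gpay:
  "(\<Sum>j\<in>J. \<beta> j * - gpay A x (y j))
     = (\<Sum>j\<in>J. \<beta> j) / 2 * (norm x)\<^sup>2 - (transpose A *v (\<Sum>j\<in>J. \<beta> j *\<^sub>R y j)) \<bullet> x"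
  by (simp add: gpay_transpose vec.sum matrix_vector_mult_scaleR inner_sum_left
      right_diff_distrib sum_subtractf sum_distrib_right sum_divide_distrib)

lemma argmin_sum_neg_gpay:
  assumes "(\<Sum>j=1..t. \<beta> j) > 0"
  shows "argmin UNIV (\<lambda>x. \<Sum>j=1..t. \<beta> j * - gpay A x (y j)) = transpose A *v weighted_mean \<beta> y t"
  unfolding sum_neg_gpay weighted_mean_def matrix_vector_mult_scaleR
  by (rule argmin_quadratic[OF assms])

lemma argmin_sum_gpay_KL:
  assumes "\<eta> > 0" and "(\<Sum>s=1..t. \<beta> s) > 0"
  shows "argmin prob_simplex (\<lambda>y. \<eta> * (\<Sum>s=1..t. \<beta> s * gpay A (x s) y) + KL y unif)
     = qmu A (1 / (\<eta> * (\<Sum>s=1..t. \<beta> s))) (weighted_mean \<beta> x t)"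
proof -
  let ?c = "\<eta> * (\<Sum>s=1..t. \<beta> s)"
  let ?d = "- \<eta> * (\<Sum>s=1..t. \<beta> s * (norm (x s))\<^sup>2) / 2"
  have objective: "(\<lambda>y. \<eta> * (\<Sum>s=1..t. \<beta> s * gpay A (x s) y) + KL y unif)
      = (\<lambda>y. ?c * (y \<bullet> (A *v weighted_mean \<beta> x t) + 1 / ?c * KL y unif) + ?d)"
    using assms by (intro ext) (simp add: sum_gpay weighted_mean_def matrix_vector_mult_scaleR field_simps)
  show ?thesis
    unfolding objective qmu_def by (rule argmin_scale_shift) (use assms in simp)
qed

locale perceptron_game =
  fixes A :: "real ^ 'd ^ 'n" and T :: nat
    and v :: "nat \<Rightarrow> real ^ 'd" and q :: "nat \<Rightarrow> real ^ 'n"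
    and \<mu> \<theta> :: "nat \<Rightarrow> real"
    and w :: "nat \<Rightarrow> real ^ 'd" and p :: "nat \<Rightarrow> real ^ 'n"
    and \<alpha> :: "nat \<Rightarrow> real"
  assumes alpha: "\<And>t. 1 \<le> t \<Longrightarrow> \<alpha> t = real t"
    and theta: "\<And>t. \<theta> t = 2 / (real t + 3)"
    and mu0: "\<mu> 0 = 4"
    and v0: "v 0 = (1 / real CARD('n)) *\<^sub>R (transpose A *v (\<chi> i. 1))"
    and q0: "q 0 = qmu A (\<mu> 0) (v 0)"
    and vstep: "\<And>t. Suc t < T \<Longrightarrow>
        v (Suc t) = (1 - \<theta> t) *\<^sub>R (v t + \<theta> t *\<^sub>R (transpose A *v q t))
                    + (\<theta> t)\<^sup>2 *\<^sub>R (transpose A *v qmu A (\<mu> t) (v t))"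
    and mustep: "\<And>t. Suc t < T \<Longrightarrow> \<mu> (Suc t) = (1 - \<theta> t) * \<mu> t"
    and qstep: "\<And>t. Suc t < T \<Longrightarrow>
        q (Suc t) = (1 - \<theta> t) *\<^sub>R q t + \<theta> t *\<^sub>R qmu A (\<mu> (Suc t)) (v (Suc t))"
    and p0: "p 0 = unif"
    and wstep: "\<And>t. 1 \<le> t \<Longrightarrow> t \<le> T \<Longrightarrow>
        w t = argmin UNIV (\<lambda>x. (\<Sum>j=1..t-1. \<alpha> j * (- gpay A x (p j)))
                                 + \<alpha> t * (- gpay A x (p (t-1))))"
    and pstep: "\<And>t. 1 \<le> t \<Longrightarrow> t \<le> T \<Longrightarrow>
        p t = argmin prob_simplex (\<lambda>y. 1/4 * (\<Sum>s=1..t. \<alpha> s * gpay A (w s) y) + KL y unif)"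
begin

lemma sum_alpha: "(\<Sum>s=1..t. \<alpha> s) = real t * (real t + 1) / 2"
  using sum_linear_weights alpha by blast

lemma sum_alpha_pos: "1 \<le> t \<Longrightarrow> (\<Sum>s=1..t. \<alpha> s) > 0"
  unfolding sum_alpha by simp

lemma w_eq_transpose_weighted_mean:
  assumes "1 \<le> t" "t \<le> T"
  shows "w t = transpose A *v weighted_mean \<alpha> (\<lambda>j. p (min j (t - 1))) t"
proof -
  obtain s where t: "t = Suc s" using assms(1) by (cases t) auto
  have "(\<lambda>x. (\<Sum>j=1..t-1. \<alpha> j * (- gpay A x (p j))) + \<alpha> t * (- gpay A x (p (t-1))))
      = (\<lambda>x. \<Sum>j=1..t. \<alpha> j * (- gpay A x (p (min j (t - 1)))))"
    unfolding t by (rule ext) (simp add: sum.cl_ivl_Suc)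
  then show ?thesis
    unfolding wstep[OF assms] by (simp only: argmin_sum_neg_gpay sum_alpha_pos assms(1))
qed

lemma p_eq_qmu_weighted_mean:
  assumes "1 \<le> t" "t \<le> T"
  shows "p t = qmu A (4 / (\<Sum>s=1..t. \<alpha> s)) (weighted_mean \<alpha> w t)"
proof -
  have "p t = qmu A (1 / (1/4 * (\<Sum>s=1..t. \<alpha> s))) (weighted_mean \<alpha> w t)"
    unfolding pstep[OF assms] by (rule argmin_sum_gpay_KL[OF _ sum_alpha_pos[OF assms(1)]]) simp
  then show ?thesis by simp
qed

lemma iterates_eq_weighted_means:
  "Suc k \<le> T \<Longrightarrow> v k = weighted_mean \<alpha> w (Suc k) \<and> q k = weighted_mean \<alpha> p (Suc k)
     \<and> \<mu> k = 4 / (\<Sum>s=1..Suc k. \<alpha> s)"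
proof (induction k)
  case 0
  have mean_1: "weighted_mean \<alpha> x (Suc 0) = x (Suc 0)" for x :: "nat \<Rightarrow> real ^ 'a"
    by (simp add: weighted_mean_def alpha)
  have "v 0 = transpose A *v unif"
    by (simp add: v0 unif_def vec_eq_iff matrix_vector_mult_def sum_divide_distrib)
  then have v: "v 0 = w 1" using w_eq_transpose_weighted_mean[of 1] 0 by (simp add: mean_1 p0)
  have "q 0 = p 1" using p_eq_qmu_weighted_mean[of 1] 0 by (simp add: q0 mu0 v mean_1 alpha)
  then show ?case using v mu0 by (simp add: mean_1 alpha)
next
  case (Suc k)
  then have v: "v k = weighted_mean \<alpha> w (Suc k)" and q: "q k = weighted_mean \<alpha> p (Suc k)"
    and \<mu>: "\<mu> k = 4 / (\<Sum>s=1..Suc k. \<alpha> s)" by auto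
  have \<theta>: "\<theta> k = 2 / (real (Suc k) + 2)" by (simp add: theta add_ac)
  have mean_Suc: "weighted_mean \<alpha> x (Suc (Suc k))
      = (1 - \<theta> k) *\<^sub>R weighted_mean \<alpha> x (Suc k) + \<theta> k *\<^sub>R x (Suc (Suc k))"
    for x :: "nat \<Rightarrow> real ^ 'a"
    unfolding \<theta> by (rule weighted_mean_linear_Suc) (simp_all add: alpha)
  have p_Suc: "qmu A (\<mu> k) (v k) = p (Suc k)"
    using p_eq_qmu_weighted_mean[of "Suc k"] Suc.prems by (simp add: v \<mu>)
  have "w (Suc (Suc k)) = transpose A *v ((1 - \<theta> k) *\<^sub>R q k + \<theta> k *\<^sub>R p (Suc k))"
  proof -
    have "weighted_mean \<alpha> (\<lambda>j. p (min j (Suc k))) (Suc k) = q k"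
      unfolding q by (rule weighted_mean_cong) simp
    then show ?thesis
      using w_eq_transpose_weighted_mean[of "Suc (Suc k)"] Suc.prems by (simp add: mean_Suc)
  qed
  then have v_Suc: "v (Suc k) = weighted_mean \<alpha> w (Suc (Suc k))"
    using vstep[of k, unfolded p_Suc] Suc.prems
    by (simp add: mean_Suc v matrix_vector_right_distrib matrix_vector_mult_scaleR
        scaleR_add_right power2_eq_square mult.commute del: transpose_matrix_vector)
  have "(1 - \<theta> k) * (4 / (\<Sum>s=1..Suc k. \<alpha> s)) = 4 / (\<Sum>s=1..Suc (Suc k). \<alpha> s)"
    unfolding \<theta> sum_alpha by (simp add: field_simps add_nonneg_eq_0_iff)
  then have \<mu>_Suc: "\<mu> (Suc k) = 4 / (\<Sum>s=1..Suc (Suc k). \<alpha> s)"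
    unfolding mustep[OF Suc.prems[unfolded Suc_le_eq]] \<mu> .
  have "q (Suc k) = weighted_mean \<alpha> p (Suc (Suc k))"
    using qstep[of k] Suc.prems p_eq_qmu_weighted_mean[of "Suc (Suc k)"]
    by (simp add: v_Suc \<mu>_Suc mean_Suc q)
  with v_Suc \<mu>_Suc show ?case by blast
qed

end

theorem proposition1:
  fixes A :: "real ^ 'd ^ 'n" and T :: nat
    and v :: "nat \<Rightarrow> real ^ 'd" and q :: "nat \<Rightarrow> real ^ 'n"
    and \<mu> \<theta> :: "nat \<Rightarrow> real"
    and w :: "nat \<Rightarrow> real ^ 'd" and p :: "nat \<Rightarrow> real ^ 'n"
    and \<alpha> :: "nat \<Rightarrow> real"
  assumes T1: "1 \<le> T"
    and alpha: "\<forall>t\<ge>1. \<alpha> t = real t"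
    and theta: "\<forall>t. \<theta> t = 2 / (real t + 3)"
    and mu0: "\<mu> 0 = 4"
    and v0: "v 0 = (1 / real CARD('n)) *\<^sub>R (transpose A *v (\<chi> i. 1))"
    and q0: "q 0 = qmu A (\<mu> 0) (v 0)"
    and vstep: "\<forall>t. 1 \<le> t \<and> t \<le> T - 1 \<longrightarrow>
        v t = (1 - \<theta> (t-1)) *\<^sub>R (v (t-1) + \<theta> (t-1) *\<^sub>R (transpose A *v q (t-1)))
              + (\<theta> (t-1))\<^sup>2 *\<^sub>R (transpose A *v qmu A (\<mu> (t-1)) (v (t-1)))"
    and mustep: "\<forall>t. 1 \<le> t \<and> t \<le> T - 1 \<longrightarrow> \<mu> t = (1 - \<theta> (t-1)) * \<mu> (t-1)"
    and qstep: "\<forall>t. 1 \<le> t \<and> t \<le> T - 1 \<longrightarrow>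
        q t = (1 - \<theta> (t-1)) *\<^sub>R q (t-1) + \<theta> (t-1) *\<^sub>R qmu A (\<mu> t) (v t)"
    and p0: "p 0 = unif"
    and wstep: "\<forall>t. 1 \<le> t \<and> t \<le> T \<longrightarrow>
        w t = argmin UNIV (\<lambda>x. (\<Sum>j=1..t-1. \<alpha> j * (- gpay A x (p j)))
                                 + \<alpha> t * (- gpay A x (p (t-1))))"
    and pstep: "\<forall>t. 1 \<le> t \<and> t \<le> T \<longrightarrow>
        p t = argmin prob_simplex (\<lambda>y. 1/4 * (\<Sum>s=1..t. \<alpha> s * gpay A (w s) y) + KL y unif)"
  shows "v (T-1) = (1 / (\<Sum>t=1..T. \<alpha> t)) *\<^sub>R (\<Sum>t=1..T. \<alpha> t *\<^sub>R w t)
     \<and> q (T-1) = (1 / (\<Sum>t=1..T. \<alpha> t)) *\<^sub>R (\<Sum>t=1..T. \<alpha> t *\<^sub>R p t)"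
proof -
  interpret perceptron_game A T v q \<mu> \<theta> w p \<alpha>
  proof
    fix t
    show "Suc t < T \<Longrightarrow> v (Suc t) = (1 - \<theta> t) *\<^sub>R (v t + \<theta> t *\<^sub>R (transpose A *v q t))
        + (\<theta> t)\<^sup>2 *\<^sub>R (transpose A *v qmu A (\<mu> t) (v t))"
      using vstep[rule_format, of "Suc t"] by simp
    show "Suc t < T \<Longrightarrow> \<mu> (Suc t) = (1 - \<theta> t) * \<mu> t"
      using mustep[rule_format, of "Suc t"] by simp
    show "Suc t < T \<Longrightarrow> q (Suc t) = (1 - \<theta> t) *\<^sub>R q t + \<theta> t *\<^sub>R qmu A (\<mu> (Suc t)) (v (Suc t))"
      using qstep[rule_format, of "Suc t"] by simp
  qed (use assms in auto)
  show ?thesis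
    using iterates_eq_weighted_means[of "T - 1"] T1 by (simp add: weighted_mean_def)
qed

end
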